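(* Let $1\le m<n$, $d\in[n]$, let every $v_j$ be $d$-self-bounding, fix $\mathbf s$, rename bidders so that $v_1(\mathbf s)\ge\cdots\ge v_n(\mathbf s)>0$, and let $k=\max\{i:v_i(\mathbf s)>v_m(\mathbf s)/2\}$. For $i\in[n]$ define $A_i=\sum_{j=1}^k\frac{m}{j(j+1)}\log_2^\dagger\!\big(v_j(\mathbf s)/\underline v_j^{(i)}(\mathbf s)\big)$. Then $\sum_{i=m}^kA_i\le 2dm$.
   Context: Signals $s_i\in S_i\subseteq\mathbb R$, $\mathbf S=S_1\times\cdots\times S_n$, valuations $v_j:\mathbf S\to\mathbb R_{>0}$. Lower estimates $\underline v_j^{(i)}(\mathbf s)=\inf_{o_i\in S_i}v_j(o_i,\mathbf s_{-i})$. $v$ is $d$-self-bounding if $\sum_i(v(\mathbf s)-\inf_{o_i}v(o_i,\mathbf s_{-i}))\le d\,v(\mathbf s)$ for all $\mathbf s$. $\log_2^\dagger(\alpha)=\max(0,\min(1,\log_2\alpha))$, with $a/0=\infty$, $\log_2\infty=\infty$. *)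

theory Defs
  imports "HOL-Library.FuncSet" Complex_Main
begin

definition profiles :: "nat \<Rightarrow> (nat \<Rightarrow> real set) \<Rightarrow> (nat \<Rightarrow> real) set" where
  "profiles n S = Pi\<^sub>E {1..n} S"

definition lower_est :: "nat \<Rightarrow> (nat \<Rightarrow> real set) \<Rightarrow> ((nat \<Rightarrow> real) \<Rightarrow> real) \<Rightarrow> (nat \<Rightarrow> real) \<Rightarrow> real" where
  "lower_est i S v s = (INF x\<in>S i. v (s(i := x)))"

definition self_bounding :: "nat \<Rightarrow> (nat \<Rightarrow> real set) \<Rightarrow> real \<Rightarrow> ((nat \<Rightarrow> real) \<Rightarrow> real) \<Rightarrow> bool" where
  "self_bounding n S d v \<longleftrightarrow>
     (\<forall>s\<in>profiles n S. (\<Sum>i=1..n. v s - lower_est i S v s) \<le> d * v s)"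

text \<open>log2dagger(a/b) = max(0, min(1, log_2 (a/b))), with a/0 = infinity and
log_2 infinity = infinity (so the value is 1 when b = 0).\<close>
definition log2dag_ratio :: "real \<Rightarrow> real \<Rightarrow> real" where
  "log2dag_ratio a b = (if b = 0 then 1 else max 0 (min 1 (log 2 (a / b))))"

end

theory Submission
  imports Defs "HOL-Analysis.Analysis"
begin

text \<open>For \<open>0 \<le> z \<le> 1\<close>, convexity of \<open>-log\<close> gives \<open>log2dag(1/z) \<le> 2(1 - z)\<close>, so each term of
  \<open>A i\<close> is at most twice the relative loss \<open>(v j s - lower_est i) / v j s\<close>. For a fixed bidder
  \<open>j\<close> these losses sum over \<open>i\<close> to at most \<open>d\<close> by self-boundingness, so exchanging the sums
  leaves \<open>2d \<Sum>j. m/(j(j+1)) < 2dm\<close>. The ordering of the bidders and the choice of \<open>k\<close> only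
  matter through \<open>k \<le> n\<close>.\<close>

lemma minus_log2_le_twice_complement:
  fixes z :: real
  assumes "1/2 \<le> z" "z \<le> 1"
  shows "- log 2 z \<le> 2 * (1 - z)"
proof -
  define t where "t = 2 * z - 1"
  have t: "0 \<le> t" "t \<le> 1" using assms by (auto simp: t_def)
  have z_eq: "z = (1 - t) * (1/2) + t * 1" by (simp add: t_def algebra_simps)
  have convex: "convex_on {0<..} (\<lambda>x. - log 2 x)" by (rule minus_log_convex) simp
  have "- log 2 ((1 - t) * (1/2) + t * 1) \<le> (1 - t) * (- log 2 (1/2)) + t * (- log 2 1)"
    using convex_onD[OF convex, of t "1/2" 1] t by simp
  also have "\<dots> = 2 * (1 - z)" by (simp add: log_divide t_def)
  finally show ?thesis by (simp only: z_eq[symmetric])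
qed

lemma log2dag_ratio_le:
  fixes a b :: real
  assumes "0 \<le> b" "b \<le> a" "0 < a"
  shows "log2dag_ratio a b \<le> 2 * (1 - b / a)"
proof (cases "b = 0")
  case True
  then show ?thesis using assms by (simp add: log2dag_ratio_def)
next
  case False
  define z where "z = b / a"
  have z: "0 < z" "z \<le> 1" using assms False by (auto simp: z_def field_simps)
  have "log 2 (a / b) = - log 2 z" using z assms False by (simp add: z_def log_divide)
  moreover have "max 0 (min 1 (- log 2 z)) \<le> 2 * (1 - z)"
    using minus_log2_le_twice_complement[of z] z by (cases "z \<le> 1/2") auto
  ultimately show ?thesis using False by (simp add: log2dag_ratio_def z_def)
qed

lemma sum_reciprocal_consecutive_products:
  "(\<Sum>j=1..k. 1 / (real j * (real j + 1))) = real k / (real k + 1)"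
proof (induction k)
  case 0
  then show ?case by simp
next
  case (Suc k)
  then have "(\<Sum>j=1..Suc k. 1 / (real j * (real j + 1)))
      = real k / (real k + 1) + 1 / ((real k + 1) * (real k + 2))"
    by (simp add: add.commute)
  also have "\<dots> = real (Suc k) / (real (Suc k) + 1)"
    by (simp add: divide_simps) (simp add: algebra_simps)
  finally show ?case .
qed

lemma lower_est_bounds:
  assumes pos: "\<forall>t\<in>profiles n S. v t > 0"
    and s: "s \<in> profiles n S" and i: "i \<in> {1..n}"
  shows "0 \<le> lower_est i S v s" "lower_est i S v s \<le> v s"
proof -
  have si: "s i \<in> S i" using s i by (auto simp: profiles_def)
  have v_upd_pos: "v (s(i := x)) > 0" if "x \<in> S i" for x
  proof -
    have "s(i := x) \<in> profiles n S"
      using s that i by (auto simp: profiles_def PiE_def Pi_def extensional_def)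
    then show ?thesis using pos by blast
  qed
  show "0 \<le> lower_est i S v s"
    unfolding lower_est_def using si v_upd_pos by (intro cINF_greatest) (auto intro: less_imp_le)
  have "(INF x\<in>S i. v (s(i := x))) \<le> v (s(i := s i))"
    using si v_upd_pos by (intro cINF_lower) (auto intro!: bdd_belowI2[where m=0] less_imp_le)
  then show "lower_est i S v s \<le> v s" by (simp add: lower_est_def)
qed

lemma self_bounding_sum_log2dag_le:
  assumes sb: "self_bounding n S d v" and pos: "\<forall>t\<in>profiles n S. v t > 0"
    and s: "s \<in> profiles n S" and I: "I \<subseteq> {1..n}"
  shows "(\<Sum>i\<in>I. log2dag_ratio (v s) (lower_est i S v s)) \<le> 2 * d"
proof -
  have vs: "v s > 0" using pos s by blast
  have "(\<Sum>i\<in>I. log2dag_ratio (v s) (lower_est i S v s))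
      \<le> (\<Sum>i\<in>I. 2 * ((v s - lower_est i S v s) / v s))"
  proof (rule sum_mono)
    fix i assume "i \<in> I"
    then have "i \<in> {1..n}" using I by auto
    then show "log2dag_ratio (v s) (lower_est i S v s) \<le> 2 * ((v s - lower_est i S v s) / v s)"
      using lower_est_bounds[OF pos s] vs log2dag_ratio_le by (simp add: diff_divide_distrib)
  qed
  also have "\<dots> = 2 / v s * (\<Sum>i\<in>I. v s - lower_est i S v s)"
    by (simp add: sum_distrib_left)
  also have "\<dots> \<le> 2 / v s * (d * v s)"
  proof -
    have "(\<Sum>i\<in>I. v s - lower_est i S v s) \<le> (\<Sum>i=1..n. v s - lower_est i S v s)"
      using I lower_est_bounds(2)[OF pos s] by (intro sum_mono2) auto
    also have "\<dots> \<le> d * v s" using sb s by (simp add: self_bounding_def)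
    finally have "(\<Sum>i\<in>I. v s - lower_est i S v s) \<le> d * v s" .
    then show ?thesis by (rule mult_left_mono) (use vs in simp)
  qed
  also have "\<dots> = 2 * d" using vs by simp
  finally show ?thesis .
qed

theorem mainTheorem18:
  fixes n m d :: nat and S :: "nat \<Rightarrow> real set"
    and v :: "nat \<Rightarrow> (nat \<Rightarrow> real) \<Rightarrow> real" and s :: "nat \<Rightarrow> real"
  assumes "1 \<le> m" "m < n"
    and "1 \<le> d" "d \<le> n"
    and pos: "\<forall>j\<in>{1..n}. \<forall>t\<in>profiles n S. v j t > 0"
    and sb: "\<forall>j\<in>{1..n}. self_bounding n S (real d) (v j)"
    and s: "s \<in> profiles n S"
    and sorted: "\<forall>j\<in>{1..n}. \<forall>j'\<in>{1..n}. j \<le> j' \<longrightarrow> v j' s \<le> v j s"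
  shows "let k = Max {i\<in>{1..n}. v i s > v m s / 2};
             A = (\<lambda>i. \<Sum>j=1..k. (real m / (real j * (real j + 1))) *
                        log2dag_ratio (v j s) (lower_est i S (v j) s))
         in (\<Sum>i=m..k. A i) \<le> 2 * real d * real m"
proof -
  define k where "k = Max {i\<in>{1..n}. v i s > v m s / 2}"
  have "v m s > 0" using pos s assms(1,2) by auto
  then have "k \<le> n" unfolding k_def using assms(1,2) by (subst Max_le_iff) (auto intro!: exI[of _ m])
  have "(\<Sum>i=m..k. \<Sum>j=1..k. real m / (real j * (real j + 1)) *
            log2dag_ratio (v j s) (lower_est i S (v j) s))
      = (\<Sum>j=1..k. real m / (real j * (real j + 1)) *
            (\<Sum>i=m..k. log2dag_ratio (v j s) (lower_est i S (v j) s)))"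
    by (subst sum.swap) (simp add: sum_distrib_left)
  also have "\<dots> \<le> (\<Sum>j=1..k. real m / (real j * (real j + 1)) * (2 * real d))"
    using \<open>k \<le> n\<close> assms(1) pos sb s
    by (intro sum_mono mult_left_mono self_bounding_sum_log2dag_le) auto
  also have "\<dots> = 2 * real d * real m * (\<Sum>j=1..k. 1 / (real j * (real j + 1)))"
    by (simp add: sum_distrib_left mult.commute)
  also have "\<dots> = 2 * real d * real m * (real k / (real k + 1))"
    by (simp only: sum_reciprocal_consecutive_products)
  also have "\<dots> \<le> 2 * real d * real m" by (simp add: field_simps)
  finally show ?thesis unfolding Let_def k_def[symmetric] .
qed

end
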